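(* For all $\{\sigma_{i,A}\;\vert\; i\in I\}\subseteq\mathfrak{S}_A$ and $\sigma_B\in\mathfrak{S}_B$, $$\iota(\inf^{\mathfrak{S}_A}_{i\in I}\sigma_{i,A},\sigma_B)=\inf^{\check{S}_{AB}}_{i\in I}\iota(\sigma_{i,A},\sigma_B),$$ and for all $\{\sigma_{i,B}\;\vert\; i\in I\}\subseteq\mathfrak{S}_B$ and $\sigma_A\in\mathfrak{S}_A$, $$\iota(\sigma_A,\inf^{\mathfrak{S}_B}_{i\in I}\sigma_{i,B})=\inf^{\check{S}_{AB}}_{i\in I}\iota(\sigma_A,\sigma_{i,B}).$$
   Context: $\mathfrak{B}=\{\mathbf{Y},\mathbf{N},\bot\}$ with $\bot$ below the incomparable $\mathbf{Y},\mathbf{N}$, meet $\wedge$, involution $\overline{\cdot}$ exchanging $\mathbf{Y},\mathbf{N}$, and commutative product $\bullet$ with $x\bullet\mathbf{Y}=x$, $x\bullet\mathbf{N}=\mathbf{N}$, $\bot\bullet\bot=\bot$. $(\mathfrak{S}_A,\mathfrak{E}_A,\epsilon^{\mathfrak{S}_A})$, $(\mathfrak{S}_B,\mathfrak{E}_B,\epsilon^{\mathfrak{S}_B})$ are States/Effects Chu spaces (down-complete Inf semi-lattices of states and effects, infima written $\inf$, evaluation maps preserving infima in each variable, with negation of effects and a constant-$\mathbf{Y}$ effect $\mathfrak{Y}_{\mathfrak{E}}$). $\check{S}_{AB}$ is the maximal tensor product: the set of maps $\Phi:\mathfrak{E}_A\times\mathfrak{E}_B\to\mathfrak{B}$ preserving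 arbitrary infima in each variable, with $\Phi(\overline{\mathfrak{l}_A},\mathfrak{Y}_{\mathfrak{E}_B})=\overline{\Phi(\mathfrak{l}_A,\mathfrak{Y}_{\mathfrak{E}_B})}$, $\Phi(\mathfrak{Y}_{\mathfrak{E}_A},\overline{\mathfrak{l}_B})=\overline{\Phi(\mathfrak{Y}_{\mathfrak{E}_A},\mathfrak{l}_B)}$, $\Phi(\mathfrak{Y}_{\mathfrak{E}_A},\mathfrak{Y}_{\mathfrak{E}_B})=\mathbf{Y}$, ordered pointwise (infima computed pointwise). The pure tensor embedding $\iota:\mathfrak{S}_A\times\mathfrak{S}_B\to\check{S}_{AB}$ is $\iota(\sigma_A,\sigma_B)(\mathfrak{l}_A,\mathfrak{l}_B)=\epsilon^{\mathfrak{S}_A}_{\mathfrak{l}_A}(\sigma_A)\bullet\epsilon^{\mathfrak{S}_B}_{\mathfrak{l}_B}(\sigma_B)$. *)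

theory Defs
  imports Main
begin

datatype B = Yb | Nb | Botb

definition leB :: "B \<Rightarrow> B \<Rightarrow> bool" where
  "leB x y \<longleftrightarrow> x = y \<or> x = Botb"

fun meetB :: "B \<Rightarrow> B \<Rightarrow> B" where
  "meetB x y = (if x = y then x else Botb)"

fun barB :: "B \<Rightarrow> B" where
  "barB Yb = Nb" | "barB Nb = Yb" | "barB Botb = Botb"

fun prodB :: "B \<Rightarrow> B \<Rightarrow> B" where
  "prodB x Yb = x"
| "prodB x Nb = Nb"
| "prodB Yb Botb = Botb"
| "prodB Nb Botb = Nb"
| "prodB Botb Botb = Botb"

definition is_glb :: "('a \<Rightarrow> 'a \<Rightarrow> bool) \<Rightarrow> 'a set \<Rightarrow> 'a \<Rightarrow> bool" where
  "is_glb le A x \<longleftrightarrow> (\<forall>a\<in>A. le x a) \<and> (\<forall>y. (\<forall>a\<in>A. le y a) \<longrightarrow> le y x)"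

definition glb :: "('a \<Rightarrow> 'a \<Rightarrow> bool) \<Rightarrow> 'a set \<Rightarrow> 'a" where
  "glb le A = (THE x. is_glb le A x)"

definition partial_order_rel :: "('a \<Rightarrow> 'a \<Rightarrow> bool) \<Rightarrow> bool" where
  "partial_order_rel le \<longleftrightarrow> (\<forall>x. le x x) \<and> (\<forall>x y. le x y \<longrightarrow> le y x \<longrightarrow> x = y)
     \<and> (\<forall>x y z. le x y \<longrightarrow> le y z \<longrightarrow> le x z)"

definition down_complete_inf_semilattice :: "('a \<Rightarrow> 'a \<Rightarrow> bool) \<Rightarrow> bool" where
  "down_complete_inf_semilattice le \<longleftrightarrow> partial_order_rel le
     \<and> (\<forall>A. A \<noteq> {} \<longrightarrow> (\<exists>x. is_glb le A x))"

abbreviation infB :: "B set \<Rightarrow> B" where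
  "infB A \<equiv> glb leB A"

text \<open>States carry the order leS, effects the order leE, eps l s is the evaluation
  of effect l on state s, negE is the negation of effects, YE is the constant-Y effect.\<close>
definition SE_chu_space ::
  "('s \<Rightarrow> 's \<Rightarrow> bool) \<Rightarrow> ('e \<Rightarrow> 'e \<Rightarrow> bool) \<Rightarrow> ('e \<Rightarrow> 's \<Rightarrow> B) \<Rightarrow> ('e \<Rightarrow> 'e) \<Rightarrow> 'e \<Rightarrow> bool" where
  "SE_chu_space leS leE eps negE YE \<longleftrightarrow>
     down_complete_inf_semilattice leS \<and> down_complete_inf_semilattice leE
   \<and> (\<forall>l A. A \<noteq> {} \<longrightarrow> eps l (glb leS A) = infB ((\<lambda>s. eps l s) ` A))
   \<and> (\<forall>s A. A \<noteq> {} \<longrightarrow> eps (glb leE A) s = infB ((\<lambda>l. eps l s) ` A))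
   \<and> (\<forall>l. negE (negE l) = l)
   \<and> (\<forall>l s. eps (negE l) s = barB (eps l s))
   \<and> (\<forall>s. eps YE s = Yb)"

definition preserves_inf_each :: "('ea \<Rightarrow> 'ea \<Rightarrow> bool) \<Rightarrow> ('eb \<Rightarrow> 'eb \<Rightarrow> bool)
    \<Rightarrow> ('ea \<Rightarrow> 'eb \<Rightarrow> B) \<Rightarrow> bool" where
  "preserves_inf_each leEA leEB \<Phi> \<longleftrightarrow>
     (\<forall>lb A. A \<noteq> {} \<longrightarrow> \<Phi> (glb leEA A) lb = infB ((\<lambda>la. \<Phi> la lb) ` A))
   \<and> (\<forall>la A. A \<noteq> {} \<longrightarrow> \<Phi> la (glb leEB A) = infB ((\<lambda>lb. \<Phi> la lb) ` A))"

definition max_tensor ::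
  "('ea \<Rightarrow> 'ea \<Rightarrow> bool) \<Rightarrow> ('ea \<Rightarrow> 'ea) \<Rightarrow> 'ea \<Rightarrow>
   ('eb \<Rightarrow> 'eb \<Rightarrow> bool) \<Rightarrow> ('eb \<Rightarrow> 'eb) \<Rightarrow> 'eb \<Rightarrow> ('ea \<Rightarrow> 'eb \<Rightarrow> B) set" where
  "max_tensor leEA negA YA leEB negB YB =
    {\<Phi>. preserves_inf_each leEA leEB \<Phi>
       \<and> (\<forall>la. \<Phi> (negA la) YB = barB (\<Phi> la YB))
       \<and> (\<forall>lb. \<Phi> YA (negB lb) = barB (\<Phi> YA lb))
       \<and> \<Phi> YA YB = Yb}"

definition le_tensor :: "('ea \<Rightarrow> 'eb \<Rightarrow> B) \<Rightarrow> ('ea \<Rightarrow> 'eb \<Rightarrow> B) \<Rightarrow> bool" where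
  "le_tensor \<Phi> \<Psi> \<longleftrightarrow> (\<forall>la lb. leB (\<Phi> la lb) (\<Psi> la lb))"

definition inf_tensor :: "('ea \<Rightarrow> 'eb \<Rightarrow> B) set \<Rightarrow> ('ea \<Rightarrow> 'eb \<Rightarrow> B)" where
  "inf_tensor F = (\<lambda>la lb. infB ((\<lambda>\<Phi>. \<Phi> la lb) ` F))"

definition iota :: "('ea \<Rightarrow> 'sa \<Rightarrow> B) \<Rightarrow> ('eb \<Rightarrow> 'sb \<Rightarrow> B) \<Rightarrow> 'sa \<Rightarrow> 'sb \<Rightarrow> ('ea \<Rightarrow> 'eb \<Rightarrow> B)" where
  "iota epsA epsB sa sb = (\<lambda>la lb. prodB (epsA la sa) (epsB lb sb))"

end

theory Submission
  imports Defs
begin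

text \<open>Infima in the maximal tensor product are computed pointwise, and the evaluation maps
  turn an infimum of states into an infimum in B. So everything reduces to the fact that
  in B the product with a fixed element preserves nonempty infima: multiplication by Y is
  the identity, by N is constant, and by bot sends N to N and everything else to bot, while
  a nonempty subset of B has infimum x if it is the singleton {x} and bot otherwise.\<close>

lemma infB_eqI:
  assumes "is_glb leB S v"
  shows "infB S = v"
  unfolding glb_def
proof (rule the_equality)
  show "is_glb leB S v" by (fact assms)
  show "\<And>w. is_glb leB S w \<Longrightarrow> w = v"
    using assms unfolding is_glb_def leB_def by blast
qed

lemma infB_singleton [simp]: "infB {x} = x"
  by (rule infB_eqI) (auto simp: is_glb_def leB_def)

lemma infB_eq_Botb:
  assumes "a \<in> S" "b \<in> S" "a \<noteq> b"
  shows "infB S = Botb"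
proof (rule infB_eqI)
  have "leB y Botb" if "\<forall>x\<in>S. leB y x" for y
    using that assms unfolding leB_def by metis
  then show "is_glb leB S Botb" by (simp add: is_glb_def leB_def)
qed

lemma infB_Botb_mem:
  assumes "Botb \<in> S"
  shows "infB S = Botb"
  by (rule infB_eqI) (use assms in \<open>auto simp: is_glb_def leB_def\<close>)

lemma prodB_commute: "prodB a b = prodB b a"
  by (cases a; cases b; simp)

lemma prodB_Botb_right: "prodB a Botb = (if a = Nb then Nb else Botb)"
  by (cases a; simp)

lemma prodB_infB_left:
  assumes "S \<noteq> {}"
  shows "prodB (infB S) b = infB ((\<lambda>a. prodB a b) ` S)"
proof -
  consider x where "S = {x}" | a c where "a \<in> S" "c \<in> S" "a \<noteq> c"
    using assms by blast
  then show ?thesis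
  proof cases
    case (2 a c)
    then have inf_S: "infB S = Botb" by (rule infB_eq_Botb)
    show ?thesis
    proof (cases b)
      case Nb
      then have "(\<lambda>a. prodB a b) ` S = {Nb}" using assms by auto
      then show ?thesis using Nb by simp
    next
      case Botb
      obtain d where "d \<in> S" "d \<noteq> Nb" using 2 by blast
      then have "Botb \<in> (\<lambda>a. prodB a b) ` S"
        using Botb by (force simp: prodB_Botb_right)
      then show ?thesis using inf_S Botb by (simp add: infB_Botb_mem)
    qed simp
  qed simp
qed

lemma prodB_infB_right:
  assumes "S \<noteq> {}"
  shows "prodB a (infB S) = infB ((\<lambda>b. prodB a b) ` S)"
  using prodB_infB_left[OF assms, of a] by (simp add: prodB_commute)

lemma SE_chu_space_eps_glb:
  assumes "SE_chu_space leS leE eps negE YE" and "I \<noteq> {}"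
  shows "eps l (glb leS (\<sigma> ` I)) = infB ((\<lambda>i. eps l (\<sigma> i)) ` I)"
  using assms unfolding SE_chu_space_def by (simp add: image_image)

lemma iota_inf_left:
  assumes "I \<noteq> {}" and "\<And>la. epsA la sA = infB ((\<lambda>i. epsA la (\<sigma>A i)) ` I)"
  shows "iota epsA epsB sA sB = inf_tensor ((\<lambda>i. iota epsA epsB (\<sigma>A i) sB) ` I)"
  using assms by (simp add: iota_def inf_tensor_def prodB_infB_left image_image)

lemma iota_inf_right:
  assumes "I \<noteq> {}" and "\<And>lb. epsB lb sB = infB ((\<lambda>i. epsB lb (\<sigma>B i)) ` I)"
  shows "iota epsA epsB sA sB = inf_tensor ((\<lambda>i. iota epsA epsB sA (\<sigma>B i)) ` I)"
  using assms by (simp add: iota_def inf_tensor_def prodB_infB_right image_image)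

theorem mainTheorem2:
  fixes leSA :: "'sa \<Rightarrow> 'sa \<Rightarrow> bool" and leEA :: "'ea \<Rightarrow> 'ea \<Rightarrow> bool"
    and epsA :: "'ea \<Rightarrow> 'sa \<Rightarrow> B" and negA :: "'ea \<Rightarrow> 'ea" and YA :: 'ea
    and leSB :: "'sb \<Rightarrow> 'sb \<Rightarrow> bool" and leEB :: "'eb \<Rightarrow> 'eb \<Rightarrow> bool"
    and epsB :: "'eb \<Rightarrow> 'sb \<Rightarrow> B" and negB :: "'eb \<Rightarrow> 'eb" and YB :: 'eb
  assumes A: "SE_chu_space leSA leEA epsA negA YA"
    and B: "SE_chu_space leSB leEB epsB negB YB"
  shows "(\<forall>(I :: 'i set) (\<sigma>A :: 'i \<Rightarrow> 'sa) \<sigma>B. I \<noteq> {} \<longrightarrow>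
            iota epsA epsB (glb leSA (\<sigma>A ` I)) \<sigma>B
              = inf_tensor ((\<lambda>i. iota epsA epsB (\<sigma>A i) \<sigma>B) ` I))
       \<and> (\<forall>(I :: 'i set) (\<sigma>B :: 'i \<Rightarrow> 'sb) \<sigma>A. I \<noteq> {} \<longrightarrow>
            iota epsA epsB \<sigma>A (glb leSB (\<sigma>B ` I))
              = inf_tensor ((\<lambda>i. iota epsA epsB \<sigma>A (\<sigma>B i)) ` I))"
proof (intro conjI allI impI)
  fix I :: "'i set" and \<sigma>A :: "'i \<Rightarrow> 'sa" and \<sigma>B
  assume "I \<noteq> {}"
  then show "iota epsA epsB (glb leSA (\<sigma>A ` I)) \<sigma>B
      = inf_tensor ((\<lambda>i. iota epsA epsB (\<sigma>A i) \<sigma>B) ` I)"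
    by (intro iota_inf_left SE_chu_space_eps_glb[OF A])
next
  fix I :: "'i set" and \<sigma>B :: "'i \<Rightarrow> 'sb" and \<sigma>A
  assume "I \<noteq> {}"
  then show "iota epsA epsB \<sigma>A (glb leSB (\<sigma>B ` I))
      = inf_tensor ((\<lambda>i. iota epsA epsB \<sigma>A (\<sigma>B i)) ` I)"
    by (intro iota_inf_right SE_chu_space_eps_glb[OF B])
qed

end
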